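(* Let $G$ be a group and $L,R$ nonempty subsets of $G$. The two-sided group digraph $2\mathrm{S}(G;L,R)$ is strongly connected if and only if $G=\mathcal{W}(L^{-1})\mathcal{W}(R)=\mathcal{W}(L)\mathcal{W}(R^{-1})$ and there exist integers $i,j\ge 0$ such that $e=w_{L^{-1},i+1}\,w_{R,i}$ and $e=w_{L^{-1},j}\,w_{R,j+1}$ for some words $w_{L^{-1},i+1},w_{R,i},w_{L^{-1},j},w_{R,j+1}$ of the indicated lengths.
   Context: For nonempty subsets $L,R$ of a group $G$, the two-sided group digraph $2\mathrm{S}(G;L,R)$ has vertex set $G$ and a directed arc $(g,h)$ from $g$ to $h$ if and only if $h=l^{-1}gr$ for some $l\in L$, $r\in R$ (loops allowed; there are no multiple arcs). For a nonempty subset $S\subseteq G$, a word in $S$ of length $n$ is a product $s_1s_2\cdots s_n$ with all $s_i\in S$ (not necessarily distinct); $w_{S,n}$ denotes the group element given by some word in $S$ of length $n$, where a word of length $0$ is the identity $e$; different occurrences of $w_{S,n}$ may denote different words. $\mathcal{W}(S)$ is the set of elements of $G$ expressible as words in $S$ of positive finite length, and for subsets $A,B$, $AB=\{ab: a\in A,b\in B\}$. A digraph is strongly connected if for every pair of vertices $g,h$ there is a directed path from $g$ to $h$ and one from $h$ to $g$. *)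

theory Defs
  imports "HOL-Algebra.Algebra"
begin

definition two_sided_arcs :: "('a, 'b) monoid_scheme \<Rightarrow> 'a set \<Rightarrow> 'a set \<Rightarrow> ('a \<times> 'a) set" where
  "two_sided_arcs G L R =
     {(g, h). g \<in> carrier G \<and> h \<in> carrier G \<and>
        (\<exists>l\<in>L. \<exists>r\<in>R. h = inv\<^bsub>G\<^esub> l \<otimes>\<^bsub>G\<^esub> g \<otimes>\<^bsub>G\<^esub> r)}"

definition two_sided_strongly_connected :: "('a, 'b) monoid_scheme \<Rightarrow> 'a set \<Rightarrow> 'a set \<Rightarrow> bool" where
  "two_sided_strongly_connected G L R \<longleftrightarrow>
     (\<forall>g\<in>carrier G. \<forall>h\<in>carrier G. (g, h) \<in> (two_sided_arcs G L R)\<^sup>*)"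

fun words :: "('a, 'b) monoid_scheme \<Rightarrow> 'a set \<Rightarrow> nat \<Rightarrow> 'a set" where
  "words G S 0 = {\<one>\<^bsub>G\<^esub>}"
| "words G S (Suc n) = {s \<otimes>\<^bsub>G\<^esub> w | s w. s \<in> S \<and> w \<in> words G S n}"

definition Wd :: "('a, 'b) monoid_scheme \<Rightarrow> 'a set \<Rightarrow> 'a set" where
  "Wd G S = (\<Union>n\<in>{1..}. words G S n)"

end

theory Submission
  imports Defs
begin

text \<open>A directed path of length \<open>n\<close> from \<open>g\<close> ends at \<open>a g b\<close> with \<open>a\<close> a word of length \<open>n\<close>
  in \<open>L\<inverse>\<close> and \<open>b\<close> a word of length \<open>n\<close> in \<open>R\<close>, and every such element is reached.
  Necessity is then read off from the paths \<open>l\<inverse> r \<rightarrow> x\<close>, \<open>x \<rightarrow> l r\<inverse>\<close>, \<open>1 \<rightarrow> l\<close> and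
  \<open>1 \<rightarrow> r\<inverse>\<close>.  For sufficiency, write \<open>h = p q\<close> with \<open>p \<in> W(L\<inverse>)\<close>, \<open>q \<in> W(R)\<close>; the lengths of
  \<open>p\<close> and \<open>q\<close> need not agree, but \<open>\<alpha>\<close> is one letter longer than \<open>\<beta>\<close> and \<open>\<delta>\<close> one letter
  longer than \<open>\<gamma>\<close>, so inserting \<open>\<alpha>\<^sup>c \<beta>\<^sup>c = 1\<close> or \<open>\<gamma>\<^sup>c \<delta>\<^sup>c = 1\<close> between them balances
  the lengths and gives a path \<open>1 \<rightarrow> h\<close>.  Dually, \<open>g = p q\<close> with \<open>p \<in> W(L)\<close>, \<open>q \<in> W(R\<inverse>)\<close>
  gives \<open>p\<inverse> g q\<inverse> = 1\<close>, and wrapping it in such an identity word gives a path \<open>g \<rightarrow> 1\<close>.\<close>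

lemma in_Wd_iff: "x \<in> Wd G S \<longleftrightarrow> (\<exists>n. x \<in> words G S (Suc n))"
proof
  assume "x \<in> Wd G S"
  then obtain n where "1 \<le> n" "x \<in> words G S n" unfolding Wd_def by blast
  then show "\<exists>n. x \<in> words G S (Suc n)" by (cases n) auto
next
  assume "\<exists>n. x \<in> words G S (Suc n)"
  then obtain n where "x \<in> words G S (Suc n)" ..
  moreover have "Suc n \<in> {1..}" by simp
  ultimately show "x \<in> Wd G S" unfolding Wd_def by (rule UN_I[rotated])
qed

context group
begin

lemma set_inv_closed: "S \<subseteq> carrier G \<Longrightarrow> set_inv S \<subseteq> carrier G"
  unfolding SET_INV_def by auto

lemma inv_in_set_inv: "s \<in> S \<Longrightarrow> inv s \<in> set_inv S"
  unfolding SET_INV_def by blast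

lemma set_inv_set_inv:
  assumes "S \<subseteq> carrier G"
  shows "set_inv (set_inv S) = S"
proof
  show "set_inv (set_inv S) \<subseteq> S"
    using assms unfolding SET_INV_def by (auto simp: subset_iff)
  show "S \<subseteq> set_inv (set_inv S)"
  proof
    fix x assume x: "x \<in> S"
    then have "inv (inv x) \<in> set_inv (set_inv S)" by (intro inv_in_set_inv)
    moreover have "x \<in> carrier G" using x assms by blast
    ultimately show "x \<in> set_inv (set_inv S)" by simp
  qed
qed

lemma words_Suc_left: "words G S (Suc n) = S <#> words G S n"
  unfolding words.simps(2) set_mult_def by blast

lemma words_closed: "S \<subseteq> carrier G \<Longrightarrow> words G S n \<subseteq> carrier G"
  by (induction n) auto

lemma Wd_closed: "S \<subseteq> carrier G \<Longrightarrow> Wd G S \<subseteq> carrier G"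
  unfolding Wd_def using words_closed by blast

lemma words_add:
  assumes "S \<subseteq> carrier G"
  shows "words G S (m + n) = words G S m <#> words G S n"
proof (induction m)
  case 0
  have "words G S 0 <#> words G S n = words G S n"
    using lcos_mult_one[OF words_closed[OF assms]] by (simp add: l_coset_eq_set_mult[symmetric])
  then show ?case by simp
next
  case (Suc m)
  have "words G S (Suc m + n) = S <#> (words G S m <#> words G S n)"
    by (simp only: add_Suc words_Suc_left Suc.IH)
  also have "\<dots> = (S <#> words G S m) <#> words G S n"
    by (rule set_mult_assoc[symmetric, OF assms words_closed[OF assms] words_closed[OF assms]])
  finally show ?case by (simp only: words_Suc_left)
qed

lemma words_mult_closed:
  assumes "S \<subseteq> carrier G" "a \<in> words G S m" "b \<in> words G S n"
  shows "a \<otimes> b \<in> words G S (m + n)"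
  unfolding words_add[OF assms(1)] set_mult_def using assms(2,3) by blast

lemma words_one: "S \<subseteq> carrier G \<Longrightarrow> words G S (Suc 0) = S"
  by (simp only: words_Suc_left words.simps(1) r_coset_eq_set_mult[symmetric] coset_mult_one)

lemma words_Suc_right:
  assumes "S \<subseteq> carrier G"
  shows "words G S (Suc n) = words G S n <#> S"
proof -
  have "words G S (Suc n) = words G S n <#> words G S (Suc 0)"
    using words_add[OF assms, of n "Suc 0"] by (simp only: add_Suc_right add_0_right)
  then show ?thesis by (simp only: words_one[OF assms])
qed

lemma words_pow:
  assumes "S \<subseteq> carrier G" "a \<in> words G S n"
  shows "a [^] c \<in> words G S (c * n)"
proof (induction c)
  case (Suc c)
  then show ?case using words_mult_closed[OF assms(1) Suc assms(2)] by (simp add: add.commute)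
qed simp

lemma inv_words:
  assumes S: "S \<subseteq> carrier G"
  shows "a \<in> words G S n \<Longrightarrow> inv a \<in> words G (set_inv S) n"
proof (induction n arbitrary: a)
  case (Suc n)
  then obtain s w where s: "s \<in> S" and w: "w \<in> words G S n" and a: "a = s \<otimes> w" by auto
  have "s \<in> carrier G" "w \<in> carrier G" using s w S words_closed by blast+
  then have inv_a: "inv a = inv w \<otimes> inv s" unfolding a by (rule inv_mult_group)
  have "inv s \<in> set_inv S" using s by (rule inv_in_set_inv)
  then have "inv w \<otimes> inv s \<in> words G (set_inv S) n <#> set_inv S"
    using Suc.IH[OF w] unfolding set_mult_def by blast
  then show ?case unfolding inv_a words_Suc_right[OF set_inv_closed[OF S]] .
qed simp

lemma inv_words_set_inv:
  assumes "S \<subseteq> carrier G" "a \<in> words G (set_inv S) n"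
  shows "inv a \<in> words G S n"
  using inv_words[OF set_inv_closed[OF assms(1)] assms(2)] by (simp only: set_inv_set_inv[OF assms(1)])

lemma two_sided_reach_imp_words:
  assumes L: "L \<subseteq> carrier G" and R: "R \<subseteq> carrier G" and g: "g \<in> carrier G"
    and "(g, h) \<in> (two_sided_arcs G L R)\<^sup>*"
  shows "\<exists>n. \<exists>a\<in>words G (set_inv L) n. \<exists>b\<in>words G R n. h = a \<otimes> g \<otimes> b"
  using assms(4)
proof (induction rule: rtrancl_induct)
  case base
  have "g = \<one> \<otimes> g \<otimes> \<one>" using g by simp
  then show ?case by (intro exI[of _ 0]) simp
next
  case (step y z)
  then obtain n a b where a: "a \<in> words G (set_inv L) n" and b: "b \<in> words G R n"
    and y: "y = a \<otimes> g \<otimes> b"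
    by blast
  from step(2) obtain l r where l: "l \<in> L" and r: "r \<in> R" and z: "z = inv l \<otimes> y \<otimes> r"
    unfolding two_sided_arcs_def by blast
  have "a \<in> carrier G" "b \<in> carrier G" "l \<in> carrier G" "r \<in> carrier G"
    using a b l r L R words_closed set_inv_closed by blast+
  then have "z = (inv l \<otimes> a) \<otimes> g \<otimes> (b \<otimes> r)" unfolding y z using g by (simp add: m_assoc)
  moreover have "inv l \<otimes> a \<in> words G (set_inv L) (Suc n)"
    using a inv_in_set_inv[OF l] unfolding words_Suc_left set_mult_def by blast
  moreover have "b \<otimes> r \<in> words G R (Suc n)"
    using b r unfolding words_Suc_right[OF R] set_mult_def by blast
  ultimately show ?case by blast
qed

lemma two_sided_reach_words:
  assumes L: "L \<subseteq> carrier G" and R: "R \<subseteq> carrier G" and g: "g \<in> carrier G"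
  shows "a \<in> words G (set_inv L) n \<Longrightarrow> b \<in> words G R n
    \<Longrightarrow> (g, a \<otimes> g \<otimes> b) \<in> (two_sided_arcs G L R)\<^sup>*"
proof (induction n arbitrary: a b)
  case 0
  then show ?case using g by simp
next
  case (Suc n)
  obtain l a' where l: "l \<in> L" and a': "a' \<in> words G (set_inv L) n" and a: "a = inv l \<otimes> a'"
    using Suc.prems(1) unfolding words_Suc_left SET_INV_def set_mult_def by blast
  obtain b' r where b': "b' \<in> words G R n" and r: "r \<in> R" and b: "b = b' \<otimes> r"
    using Suc.prems(2) unfolding words_Suc_right[OF R] set_mult_def by blast
  have c: "a' \<in> carrier G" "b' \<in> carrier G" "l \<in> carrier G" "r \<in> carrier G"
    using a' b' l r L R words_closed set_inv_closed by blast+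
  then have "a \<otimes> g \<otimes> b = inv l \<otimes> (a' \<otimes> g \<otimes> b') \<otimes> r" unfolding a b using g by (simp add: m_assoc)
  then have "(a' \<otimes> g \<otimes> b', a \<otimes> g \<otimes> b) \<in> two_sided_arcs G L R"
    using c g l r unfolding two_sided_arcs_def by auto
  with Suc.IH[OF a' b'] show ?case by (rule rtrancl_into_rtrancl)
qed

lemma identity_words_pow:
  assumes A: "A \<subseteq> carrier G" and B: "B \<subseteq> carrier G"
    and u: "u \<in> words G A n" and v: "v \<in> words G B n'" and uv: "u \<otimes> v = \<one>"
  shows "u [^] c \<in> words G A (c * n)" "v [^] c \<in> words G B (c * n')" "u [^] c \<otimes> v [^] c = \<one>"
proof -
  show "u [^] c \<in> words G A (c * n)" "v [^] c \<in> words G B (c * n')"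
    using words_pow[OF A u] words_pow[OF B v] .
  have "u \<in> carrier G" "v \<in> carrier G" using A B u v words_closed by blast+
  moreover from calculation have "u = inv v" using uv inv_equality by simp
  ultimately show "u [^] c \<otimes> v [^] c = \<one>" by (simp add: nat_pow_inv)
qed

lemma identity_words_balance:
  assumes A: "A \<subseteq> carrier G" and B: "B \<subseteq> carrier G"
    and "\<exists>i. \<exists>\<alpha>\<in>words G A (i + 1). \<exists>\<beta>\<in>words G B i. \<one> = \<alpha> \<otimes> \<beta>"
    and "\<exists>j. \<exists>\<gamma>\<in>words G A j. \<exists>\<delta>\<in>words G B (j + 1). \<one> = \<gamma> \<otimes> \<delta>"
  shows "\<exists>n n'. \<exists>u\<in>words G A n. \<exists>v\<in>words G B n'. u \<otimes> v = \<one> \<and> m + n = k + n'"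
proof (cases "m \<le> k")
  case True
  from assms(3) obtain i \<alpha> \<beta>
    where "\<alpha> \<in> words G A (i + 1)" "\<beta> \<in> words G B i" "\<alpha> \<otimes> \<beta> = \<one>"
    by metis
  note pow = identity_words_pow[OF A B this]
  obtain c where "k = m + c" using True le_Suc_ex by blast
  then have "m + c * (i + 1) = k + c * i" by simp
  with pow[of c] show ?thesis by (intro exI[of _ "c * (i + 1)"] exI[of _ "c * i"]) blast
next
  case False
  from assms(4) obtain j \<gamma> \<delta>
    where "\<gamma> \<in> words G A j" "\<delta> \<in> words G B (j + 1)" "\<gamma> \<otimes> \<delta> = \<one>"
    by metis
  note pow = identity_words_pow[OF A B this]
  obtain c where "m = k + c" using False le_Suc_ex nat_le_linear by metis
  then have "m + c * j = k + c * (j + 1)" by simp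
  with pow[of c] show ?thesis by (intro exI[of _ "c * j"] exI[of _ "c * (j + 1)"]) blast
qed

lemma two_sided_reach_from_one:
  assumes L: "L \<subseteq> carrier G" and R: "R \<subseteq> carrier G"
    and h: "h \<in> Wd G (set_inv L) <#> Wd G R"
    and balance: "\<And>m k. \<exists>n n'. \<exists>u\<in>words G (set_inv L) n. \<exists>v\<in>words G R n'. u \<otimes> v = \<one> \<and> m + n = k + n'"
  shows "(\<one>, h) \<in> (two_sided_arcs G L R)\<^sup>*"
proof -
  obtain p q where "p \<in> Wd G (set_inv L)" "q \<in> Wd G R" and pq: "h = p \<otimes> q"
    using h unfolding set_mult_def by blast
  then obtain m k where p: "p \<in> words G (set_inv L) m" and q: "q \<in> words G R k"
    unfolding in_Wd_iff by blast
  obtain n n' u v where u: "u \<in> words G (set_inv L) n" and v: "v \<in> words G R n'"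
    and uv: "u \<otimes> v = \<one>" and len: "m + n = k + n'"
    using balance by blast
  have "p \<in> carrier G" "q \<in> carrier G" "u \<in> carrier G" "v \<in> carrier G"
    using p q u v L R words_closed set_inv_closed by blast+
  then have "(p \<otimes> u) \<otimes> \<one> \<otimes> (v \<otimes> q) = p \<otimes> (u \<otimes> v) \<otimes> q" by (simp add: m_assoc)
  also have "\<dots> = h" using pq uv \<open>p \<in> carrier G\<close> by simp
  finally have eq: "(p \<otimes> u) \<otimes> \<one> \<otimes> (v \<otimes> q) = h" .
  have "p \<otimes> u \<in> words G (set_inv L) (m + n)"
    using words_mult_closed[OF set_inv_closed[OF L] p u] .
  moreover have "v \<otimes> q \<in> words G R (m + n)"
    using words_mult_closed[OF R v q] len by (simp add: add.commute)
  ultimately show ?thesis using two_sided_reach_words[OF L R one_closed] eq by metis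
qed

lemma two_sided_reach_to_one:
  assumes L: "L \<subseteq> carrier G" and R: "R \<subseteq> carrier G"
    and g: "g \<in> Wd G L <#> Wd G (set_inv R)"
    and balance: "\<And>m k. \<exists>n n'. \<exists>u\<in>words G (set_inv L) n. \<exists>v\<in>words G R n'. u \<otimes> v = \<one> \<and> m + n = k + n'"
  shows "(g, \<one>) \<in> (two_sided_arcs G L R)\<^sup>*"
proof -
  obtain p q where "p \<in> Wd G L" "q \<in> Wd G (set_inv R)" and pq: "g = p \<otimes> q"
    using g unfolding set_mult_def by blast
  then obtain m k where p: "p \<in> words G L m" and q: "q \<in> words G (set_inv R) k"
    unfolding in_Wd_iff by blast
  obtain n n' u v where u: "u \<in> words G (set_inv L) n" and v: "v \<in> words G R n'"
    and uv: "u \<otimes> v = \<one>" and len: "m + n = k + n'"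
    using balance by blast
  have c: "p \<in> carrier G" "q \<in> carrier G" "u \<in> carrier G" "v \<in> carrier G"
    using p q u v L R words_closed set_inv_closed by blast+
  have g_carrier: "g \<in> carrier G" using c pq by simp
  have "inv p \<otimes> g \<otimes> inv q = \<one>" using c unfolding pq by (simp add: m_assoc)
  moreover have "(u \<otimes> inv p) \<otimes> g \<otimes> (inv q \<otimes> v) = u \<otimes> (inv p \<otimes> g \<otimes> inv q) \<otimes> v"
    using c g_carrier by (simp add: m_assoc)
  ultimately have eq: "(u \<otimes> inv p) \<otimes> g \<otimes> (inv q \<otimes> v) = \<one>" using c uv by simp
  have "u \<otimes> inv p \<in> words G (set_inv L) (m + n)"
    using words_mult_closed[OF set_inv_closed[OF L] u inv_words[OF L p]] by (simp add: add.commute)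
  moreover have "inv q \<otimes> v \<in> words G R (m + n)"
    using words_mult_closed[OF R inv_words_set_inv[OF R q] v] len by simp
  ultimately show ?thesis using two_sided_reach_words[OF L R g_carrier] eq by metis
qed

lemma two_sided_strongly_connected_reach:
  assumes L: "L \<subseteq> carrier G" and R: "R \<subseteq> carrier G"
    and SC: "two_sided_strongly_connected G L R" and g: "g \<in> carrier G" and h: "h \<in> carrier G"
  obtains n a b where "a \<in> words G (set_inv L) n" "b \<in> words G R n" "h = a \<otimes> g \<otimes> b"
  using two_sided_reach_imp_words[OF L R g] SC g h unfolding two_sided_strongly_connected_def by blast

lemma two_sided_strongly_connected_carrier_eq_left:
  assumes L: "L \<subseteq> carrier G" and R: "R \<subseteq> carrier G" and "L \<noteq> {}" "R \<noteq> {}"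
    and SC: "two_sided_strongly_connected G L R"
  shows "carrier G = Wd G (set_inv L) <#> Wd G R"
proof
  show "Wd G (set_inv L) <#> Wd G R \<subseteq> carrier G"
    by (intro setmult_subset_G Wd_closed set_inv_closed L R)
  obtain l r where l: "l \<in> L" and r: "r \<in> R" using assms by blast
  have c: "l \<in> carrier G" "r \<in> carrier G" using l r L R by blast+
  show "carrier G \<subseteq> Wd G (set_inv L) <#> Wd G R"
  proof
    fix x assume x: "x \<in> carrier G"
    have "inv l \<otimes> r \<in> carrier G" using c by simp
    then obtain n a b where a: "a \<in> words G (set_inv L) n" and b: "b \<in> words G R n"
      and eq: "x = a \<otimes> (inv l \<otimes> r) \<otimes> b"
      by (rule two_sided_strongly_connected_reach[OF L R SC _ x])
    have "a \<in> carrier G" "b \<in> carrier G" using a b L R words_closed set_inv_closed by blast+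
    then have "x = (a \<otimes> inv l) \<otimes> (r \<otimes> b)" using eq c by (simp add: m_assoc)
    moreover have "a \<otimes> inv l \<in> Wd G (set_inv L)"
      using a inv_in_set_inv[OF l] unfolding in_Wd_iff words_Suc_right[OF set_inv_closed[OF L]]
        set_mult_def by blast
    moreover have "r \<otimes> b \<in> Wd G R"
      using b r unfolding in_Wd_iff words_Suc_left set_mult_def by blast
    ultimately show "x \<in> Wd G (set_inv L) <#> Wd G R" unfolding set_mult_def by blast
  qed
qed

lemma two_sided_strongly_connected_carrier_eq_right:
  assumes L: "L \<subseteq> carrier G" and R: "R \<subseteq> carrier G" and "L \<noteq> {}" "R \<noteq> {}"
    and SC: "two_sided_strongly_connected G L R"
  shows "carrier G = Wd G L <#> Wd G (set_inv R)"
proof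
  show "Wd G L <#> Wd G (set_inv R) \<subseteq> carrier G"
    by (intro setmult_subset_G Wd_closed set_inv_closed L R)
  obtain l r where l: "l \<in> L" and r: "r \<in> R" using assms by blast
  have c: "l \<in> carrier G" "r \<in> carrier G" using l r L R by blast+
  show "carrier G \<subseteq> Wd G L <#> Wd G (set_inv R)"
  proof
    fix x assume x: "x \<in> carrier G"
    have "l \<otimes> inv r \<in> carrier G" using c by simp
    then obtain n a b where a: "a \<in> words G (set_inv L) n" and b: "b \<in> words G R n"
      and eq: "l \<otimes> inv r = a \<otimes> x \<otimes> b"
      by (rule two_sided_strongly_connected_reach[OF L R SC x])
    have ca: "a \<in> carrier G" "b \<in> carrier G" using a b L R words_closed set_inv_closed by blast+
    have "(inv a \<otimes> l) \<otimes> (inv r \<otimes> inv b) = inv a \<otimes> (l \<otimes> inv r) \<otimes> inv b"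
      using ca c by (simp add: m_assoc)
    also have "\<dots> = x" unfolding eq using ca x by (simp add: m_assoc flip: m_assoc[of "inv a" a x])
    finally have "x = (inv a \<otimes> l) \<otimes> (inv r \<otimes> inv b)" ..
    moreover have "inv a \<otimes> l \<in> Wd G L"
      using inv_words_set_inv[OF L a] l unfolding in_Wd_iff words_Suc_right[OF L] set_mult_def by blast
    moreover have "inv r \<otimes> inv b \<in> Wd G (set_inv R)"
      using inv_words[OF R b] inv_in_set_inv[OF r] unfolding in_Wd_iff words_Suc_left set_mult_def
      by blast
    ultimately show "x \<in> Wd G L <#> Wd G (set_inv R)" unfolding set_mult_def by blast
  qed
qed

lemma two_sided_strongly_connected_identity_words:
  assumes L: "L \<subseteq> carrier G" and R: "R \<subseteq> carrier G" and "L \<noteq> {}" "R \<noteq> {}"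
    and SC: "two_sided_strongly_connected G L R"
  shows "\<exists>i. \<exists>\<alpha>\<in>words G (set_inv L) (i + 1). \<exists>\<beta>\<in>words G R i. \<one> = \<alpha> \<otimes> \<beta>"
    and "\<exists>j. \<exists>\<gamma>\<in>words G (set_inv L) j. \<exists>\<delta>\<in>words G R (j + 1). \<one> = \<gamma> \<otimes> \<delta>"
proof -
  obtain l r where l: "l \<in> L" and r: "r \<in> R" using assms by blast
  have c: "l \<in> carrier G" "r \<in> carrier G" using l r L R by blast+
  obtain n a b where a: "a \<in> words G (set_inv L) n" and b: "b \<in> words G R n"
    and eq: "l = a \<otimes> \<one> \<otimes> b"
    using two_sided_strongly_connected_reach[OF L R SC one_closed c(1)] .
  have "a \<in> carrier G" "b \<in> carrier G" using a b L R words_closed set_inv_closed by blast+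
  then have "\<one> = (inv l \<otimes> a) \<otimes> b" using c unfolding eq by (simp add: m_assoc)
  moreover have "inv l \<otimes> a \<in> words G (set_inv L) (n + 1)"
    using a inv_in_set_inv[OF l] unfolding Suc_eq_plus1[symmetric] words_Suc_left set_mult_def
    by blast
  ultimately show "\<exists>i. \<exists>\<alpha>\<in>words G (set_inv L) (i + 1). \<exists>\<beta>\<in>words G R i. \<one> = \<alpha> \<otimes> \<beta>"
    using b by blast
  obtain n a b where a: "a \<in> words G (set_inv L) n" and b: "b \<in> words G R n"
    and eq: "inv r = a \<otimes> \<one> \<otimes> b"
    using two_sided_strongly_connected_reach[OF L R SC one_closed inv_closed[OF c(2)]] .
  have "a \<in> carrier G" "b \<in> carrier G" using a b L R words_closed set_inv_closed by blast+
  then have "a \<otimes> (b \<otimes> r) = (a \<otimes> \<one> \<otimes> b) \<otimes> r" using c by (simp add: m_assoc)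
  also have "\<dots> = \<one>" unfolding eq[symmetric] using c by simp
  finally have "\<one> = a \<otimes> (b \<otimes> r)" ..
  moreover have "b \<otimes> r \<in> words G R (n + 1)"
    using b r unfolding Suc_eq_plus1[symmetric] words_Suc_right[OF R] set_mult_def by blast
  ultimately show "\<exists>j. \<exists>\<gamma>\<in>words G (set_inv L) j. \<exists>\<delta>\<in>words G R (j + 1). \<one> = \<gamma> \<otimes> \<delta>"
    using a by blast
qed

end

theorem mainTheorem1:
  fixes G (structure) and L R :: "'a set"
  assumes "group G" and "L \<subseteq> carrier G" and "R \<subseteq> carrier G"
    and "L \<noteq> {}" and "R \<noteq> {}"
  shows "two_sided_strongly_connected G L R \<longleftrightarrow>
    (carrier G = Wd G (set_inv L) <#> Wd G R \<and>
     carrier G = Wd G L <#> Wd G (set_inv R) \<and>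
     (\<exists>i::nat. \<exists>a\<in>words G (set_inv L) (i + 1). \<exists>b\<in>words G R i. \<one> = a \<otimes> b) \<and>
     (\<exists>j::nat. \<exists>a\<in>words G (set_inv L) j. \<exists>b\<in>words G R (j + 1). \<one> = a \<otimes> b))"
    (is "_ \<longleftrightarrow> ?left \<and> ?right \<and> ?identity_i \<and> ?identity_j")
proof -
  interpret group G by fact
  note L = \<open>L \<subseteq> carrier G\<close> and R = \<open>R \<subseteq> carrier G\<close>
  show ?thesis
  proof
    assume SC: "two_sided_strongly_connected G L R"
    show "?left \<and> ?right \<and> ?identity_i \<and> ?identity_j"
      using two_sided_strongly_connected_carrier_eq_left[OF L R assms(4,5) SC]
        two_sided_strongly_connected_carrier_eq_right[OF L R assms(4,5) SC]
        two_sided_strongly_connected_identity_words[OF L R assms(4,5) SC] by (intro conjI)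
  next
    assume H: "?left \<and> ?right \<and> ?identity_i \<and> ?identity_j"
    then have balance: "\<And>m k. \<exists>n n'. \<exists>u\<in>words G (set_inv L) n. \<exists>v\<in>words G R n'.
        u \<otimes> v = \<one> \<and> m + n = k + n'"
      using identity_words_balance[OF set_inv_closed[OF L] R] by blast
    show "two_sided_strongly_connected G L R"
      unfolding two_sided_strongly_connected_def
    proof (intro ballI)
      fix g h assume "g \<in> carrier G" "h \<in> carrier G"
      then have "(g, \<one>) \<in> (two_sided_arcs G L R)\<^sup>*" "(\<one>, h) \<in> (two_sided_arcs G L R)\<^sup>*"
        using two_sided_reach_to_one[OF L R _ balance] two_sided_reach_from_one[OF L R _ balance] H
        by blast+
      then show "(g, h) \<in> (two_sided_arcs G L R)\<^sup>*" by (rule rtrancl_trans)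
    qed
  qed
qed

end
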